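(* Let $p$ be a binary word with exactly $2$ runs and length $l\ge3$. For every $n\ge l+2$, $B_{n,p}(M_{n,p}-1)=0$. In particular, $p$ has an internal zero at every $n\ge l+2$.
   Context: $c_p(w)$ is the number of occurrences of $p$ as a (not necessarily consecutive) subsequence of $w$; $B_{n,p}(k)$ is the number of binary words of length $n$ with $c_p(w)=k$; $M_{n,p}=\max\{c_p(w):w\in\{0,1\}^n\}$. A run is a maximal block of consecutive equal letters. $p$ has an internal zero at $n$ if there exist $0\le k_1<k_2<k_3$ with $B_{n,p}(k_1)\ne0$, $B_{n,p}(k_2)=0$, $B_{n,p}(k_3)\ne0$. *)

theory Defs
  imports Main
begin

(* Binary words are lists of booleans (False = 0, True = 1). *)

definition occ :: "bool list \<Rightarrow> bool list \<Rightarrow> nat" where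
  "occ p w = card {I. I \<subseteq> {0..<length w} \<and> card I = length p \<and> nths w I = p}"

definition Bcount :: "nat \<Rightarrow> bool list \<Rightarrow> nat \<Rightarrow> nat" where
  "Bcount n p k = card {w :: bool list. length w = n \<and> occ p w = k}"

definition Mmax :: "nat \<Rightarrow> bool list \<Rightarrow> nat" where
  "Mmax n p = Max {occ p w | w :: bool list. length w = n}"

definition num_runs :: "bool list \<Rightarrow> nat" where
  "num_runs p = length (remdups_adj p)"

definition has_internal_zero :: "bool list \<Rightarrow> nat \<Rightarrow> bool" where
  "has_internal_zero p n \<longleftrightarrow>
     (\<exists>k1 k2 k3. k1 < k2 \<and> k2 < k3 \<and> Bcount n p k1 \<noteq> 0 \<and> Bcount n p k2 = 0 \<and> Bcount n p k3 \<noteq> 0)"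

end

theory Submission
  imports Defs "HOL.Binomial_Plus"
begin

text \<open>Write \<open>p = x\<^sup>a (\<not>x)\<^sup>b\<close> with \<open>a, b \<ge> 1\<close>. A word with \<open>k\<close> letters \<open>x\<close> and \<open>n - k\<close> letters
\<open>\<not>x\<close> contains at most \<open>C(k,a) C(n-k,b)\<close> copies of \<open>p\<close>, with equality for the sorted word
\<open>x\<^sup>k (\<not>x)\<^sup>n\<^sup>-\<^sup>k\<close>, while an unsorted word falls short by at least \<open>C(k-1,a-1) C(n-k-1,b-1)\<close>.
Hence \<open>M\<close> is the maximum of the profile \<open>g(k) = C(k,a) C(n-k,b)\<close>. This profile is unimodal and,
for \<open>a + b \<ge> 3\<close> and \<open>n \<ge> a + b + 2\<close>, none of its steps \<open>g(k+1) - g(k)\<close> is \<open>\<plusminus>1\<close>, so it skips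
the value \<open>M - 1\<close>. An unsorted word with \<open>M - 1\<close> occurrences would therefore need \<open>g(k) = M\<close>,
but at a maximiser its shortfall is at least \<open>2\<close>.\<close>

section \<open>Counting occurrences recursively\<close>

definition embeddings :: "bool list \<Rightarrow> bool list \<Rightarrow> nat set set" where
  "embeddings p w = {I. I \<subseteq> {0..<length w} \<and> card I = length p \<and> nths w I = p}"

lemma occ_eq_card_embeddings: "occ p w = card (embeddings p w)"
  by (simp add: occ_def embeddings_def)

lemma finite_embeddings: "finite (embeddings p w)"
  unfolding embeddings_def by (rule finite_subset[of _ "Pow {0..<length w}"]) auto

lemma embeddings_Nil_word: "embeddings p [] = (if p = [] then {{}} else {})"
  unfolding embeddings_def by auto

lemma embeddings_Nil_pattern: "embeddings [] w = {{}}"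
  unfolding embeddings_def using finite_subset[of _ "{0..<length w}"] by fastforce

lemma embeddings_Cons_Cons:
  "embeddings (q # p) (c # w) =
     image Suc ` embeddings (q # p) w \<union>
     (if q = c then (\<lambda>J. insert 0 (Suc ` J)) ` embeddings p w else {})"
proof (intro equalityI subsetI)
  fix I assume "I \<in> embeddings (q # p) (c # w)"
  then have sub: "I \<subseteq> {0..<Suc (length w)}" and cI: "card I = Suc (length p)"
    and nI: "nths (c # w) I = q # p" by (auto simp: embeddings_def)
  define J where "J = {j. Suc j \<in> I}"
  have Jsub: "J \<subseteq> {0..<length w}" using sub by (auto simp: J_def)
  then have "finite J" by (rule finite_subset) simp
  have nths_I: "nths (c # w) I = (if 0 \<in> I then [c] else []) @ nths w J"
    by (simp add: nths_Cons J_def)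
  show "I \<in> image Suc ` embeddings (q # p) w \<union>
     (if q = c then (\<lambda>J. insert 0 (Suc ` J)) ` embeddings p w else {})"
  proof (cases "0 \<in> I")
    case False
    then have "I = Suc ` J" using sub by (auto simp: J_def image_iff) (metis not0_implies_Suc)
    moreover have "J \<in> embeddings (q # p) w"
      using False nths_I nI cI Jsub \<open>I = Suc ` J\<close> by (simp add: embeddings_def card_image)
    ultimately show ?thesis by blast
  next
    case True
    then have I: "I = insert 0 (Suc ` J)" using sub by (auto simp: J_def image_iff) (metis not0_implies_Suc)
    then have "card I = Suc (card J)" using \<open>finite J\<close> by (simp add: card_image)
    then have "J \<in> embeddings p w" "q = c" using True nths_I nI cI Jsub by (auto simp: embeddings_def)
    then show ?thesis using I by auto
  qed
next
  fix I assume "I \<in> image Suc ` embeddings (q # p) w \<union>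
     (if q = c then (\<lambda>J. insert 0 (Suc ` J)) ` embeddings p w else {})"
  then consider J where "I = Suc ` J" "J \<in> embeddings (q # p) w"
    | J where "q = c" "I = insert 0 (Suc ` J)" "J \<in> embeddings p w"
    by (auto split: if_splits)
  then show "I \<in> embeddings (q # p) (c # w)"
  proof cases
    case 1
    then have "finite J" "{j. Suc j \<in> I} = J" by (auto simp: embeddings_def intro: finite_subset)
    with 1 show ?thesis by (auto simp: embeddings_def card_image nths_Cons)
  next
    case 2
    then have "finite J" "{j. Suc j \<in> I} = J" by (auto simp: embeddings_def intro: finite_subset)
    with 2 show ?thesis by (auto simp: embeddings_def card_image nths_Cons)
  qed
qed

lemma occ_Nil_word [simp]: "occ p [] = (if p = [] then 1 else 0)"
  by (simp add: occ_eq_card_embeddings embeddings_Nil_word)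

lemma occ_Nil_pattern [simp]: "occ [] w = 1"
  by (simp add: occ_eq_card_embeddings embeddings_Nil_pattern)

lemma occ_Cons_Cons [simp]:
  "occ (q # p) (c # w) = occ (q # p) w + (if q = c then occ p w else 0)"
proof -
  have "inj (image Suc)" by (simp add: inj_image_eq_iff inj_def)
  moreover have "inj (\<lambda>J. insert 0 (Suc ` J))"
    by (rule injI) (metis Zero_not_Suc image_iff insert_ident inj_image_eq_iff inj_Suc)
  moreover have "image Suc ` embeddings (q # p) w \<inter> (\<lambda>J. insert 0 (Suc ` J)) ` embeddings p w = {}"
    by auto
  ultimately show ?thesis
    unfolding occ_eq_card_embeddings embeddings_Cons_Cons
    by (auto simp: card_Un_disjoint card_image finite_embeddings inj_on_subset)
qed

section \<open>Two-run patterns\<close>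

definition sorted_by :: "bool \<Rightarrow> bool list \<Rightarrow> bool" where
  "sorted_by x w \<longleftrightarrow> sorted (map (\<lambda>c. c \<noteq> x) w)"

lemma sorted_by_Nil [simp]: "sorted_by x []"
  by (simp add: sorted_by_def)

lemma sorted_if_False_notin: "False \<notin> set bs \<Longrightarrow> sorted bs"
  by (induction bs) (auto simp: le_bool_def, metis (full_types))

lemma sorted_by_Cons [simp]:
  "sorted_by x (c # w) \<longleftrightarrow> (if c = x then sorted_by x w else x \<notin> set w)"
  by (auto simp: sorted_by_def intro!: sorted_if_False_notin, metis (full_types))

lemma count_list_replicate [simp]: "count_list (replicate m y) z = (if y = z then m else 0)"
  by (induction m) auto

lemma sorted_by_eq_replicate:
  "sorted_by x w \<Longrightarrow> w = replicate (count_list w x) x @ replicate (count_list w (\<not> x)) (\<not> x)"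
proof (induction w)
  case (Cons c w)
  show ?case
  proof (cases "c = x")
    case True
    with Cons show ?thesis by simp
  next
    case False
    then have "x \<notin> set w" "c = (\<not> x)" using Cons.prems by auto
    then have "\<forall>y\<in>set w. y = (\<not> x)" by (auto, metis (full_types))
    then have "w = replicate (length w) (\<not> x)" by (simp add: replicate_length_same)
    then obtain l where "w = replicate l (\<not> x)" by blast
    with \<open>c = (\<not> x)\<close> show ?thesis by simp
  qed
qed simp

lemma mem_if_not_sorted_by: "\<not> sorted_by x w \<Longrightarrow> x \<in> set w"
  by (induction w) (auto split: if_splits)

lemma binomial_le_Suc: "n choose k \<le> Suc n choose k"
  by (cases k) simp_all

lemma occ_replicate: "occ (replicate b y) w = count_list w y choose b"
proof (induction w arbitrary: b)
  case Nil
  then show ?case by (cases b) auto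
next
  case (Cons c w)
  show ?case
  proof (cases b)
    case (Suc b')
    with Cons.IH[of b] Cons.IH[of b'] show ?thesis by auto
  qed simp
qed

lemma occ_Cons_not_mem: "x \<notin> set w \<Longrightarrow> occ (x # p) w = 0"
  by (induction w) auto

lemma occ_two_runs_sorted:
  "occ (replicate a x @ replicate b (\<not> x)) (replicate k x @ replicate m (\<not> x))
     = (k choose a) * (m choose b)"
proof (induction k arbitrary: a)
  case 0
  then show ?case by (cases a) (auto simp: occ_replicate occ_Cons_not_mem)
next
  case (Suc k)
  show ?case
  proof (cases a)
    case 0
    then show ?thesis by (simp add: occ_replicate)
  next
    case (Suc a')
    with Suc.IH[of a] Suc.IH[of a'] show ?thesis by (simp add: algebra_simps)
  qed
qed

lemma occ_two_runs_le:
  "occ (replicate a x @ replicate b (\<not> x)) w \<le> (count_list w x choose a) * (count_list w (\<not> x) choose b)"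
proof (induction w arbitrary: a)
  case Nil
  then show ?case by (cases a; cases b) auto
next
  case (Cons c w)
  show ?case
  proof (cases a)
    case 0
    then show ?thesis by (simp add: occ_replicate)
  next
    case (Suc a')
    show ?thesis
    proof (cases "c = x")
      case True
      with Suc Cons.IH[of a] Cons.IH[of a'] show ?thesis by (simp add: algebra_simps)
    next
      case False
      then have "c = (\<not> x)" by auto
      with Suc Cons.IH[of a] show ?thesis
        by (auto intro: order.trans mult_le_mono2 binomial_le_Suc)
    qed
  qed
qed

text \<open>An unsorted word has a \<open>\<not>x\<close> before some \<open>x\<close>. Choosing \<open>a\<close> further letters \<open>x\<close> and \<open>b\<close> further
letters \<open>\<not>x\<close> around this pair gives choices counted by the product that are not occurrences.\<close>

lemma occ_two_runs_deficit:
  assumes "\<not> sorted_by x w"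
  shows "occ (replicate (Suc a) x @ replicate (Suc b) (\<not> x)) w
           + (count_list w x - 1 choose a) * (count_list w (\<not> x) - 1 choose b)
         \<le> (count_list w x choose Suc a) * (count_list w (\<not> x) choose Suc b)"
  using assms
proof (induction w arbitrary: a)
  case (Cons c w)
  define kx where "kx = count_list w x"
  define ky where "ky = count_list w (\<not> x)"
  show ?case
  proof (cases "c = x")
    case False
    then have c: "c = (\<not> x)" by auto
    with Cons.prems have "x \<in> set w" by simp
    then obtain j where j: "kx = Suc j" by (metis count_list_0_iff kx_def not0_implies_Suc)
    let ?P = "replicate (Suc a) x @ replicate (Suc b) (\<not> x)"
    have "occ ?P (c # w) = occ ?P w"
      using c by simp
    also have "\<dots> \<le> (kx choose Suc a) * (ky choose Suc b)"
      unfolding kx_def ky_def by (rule occ_two_runs_le)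
    finally have "occ ?P (c # w) + (kx - 1 choose a) * (ky choose b)
                   \<le> (kx choose Suc a) * (ky choose Suc b) + (kx choose Suc a) * (ky choose b)"
      using j by (simp add: add_mono)
    then show ?thesis using c by (simp add: kx_def ky_def algebra_simps)
  next
    case True
    with Cons.prems have "\<not> sorted_by x w" by simp
    then obtain j where j: "kx = Suc j"
      by (metis count_list_0_iff kx_def mem_if_not_sorted_by not0_implies_Suc)
    have IH: "occ (replicate (Suc a') x @ replicate (Suc b) (\<not> x)) w + (kx - 1 choose a') * (ky - 1 choose b)
                \<le> (kx choose Suc a') * (ky choose Suc b)" for a'
      using Cons.IH \<open>\<not> sorted_by x w\<close> by (simp add: kx_def ky_def)
    show ?thesis
    proof (cases a)
      case 0
      with IH[of 0] True occ_replicate[of "Suc b" "\<not> x" w] show ?thesis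
        by (simp add: kx_def ky_def)
    next
      case (Suc a')
      with IH[of a] IH[of a'] True j show ?thesis by (simp add: kx_def ky_def algebra_simps)
    qed
  qed
qed simp

section \<open>Steps of a product of two binomials\<close>

lemma Suc_times_binomial_Suc_int:
  "int (Suc a) * int (k choose Suc a) = (int k - int a) * int (k choose a)"
proof (cases "a \<le> k")
  case True
  have "Suc a * (k choose Suc a) = (k - a) * (k choose a)"
  proof (cases k)
    case (Suc n)
    then show ?thesis
      using Suc_times_binomial[of a n] binomial_absorb_comp[of "Suc n" a] by simp
  qed simp
  with True show ?thesis by (metis of_nat_diff of_nat_mult)
qed (simp add: binomial_eq_0)

text \<open>\<open>jump A B k (n - k - 1)\<close> is the step \<open>g(k+1) - g(k)\<close> of \<open>g(k) = C(k,A+1) C(n-k,B+1)\<close>.\<close>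

definition jump :: "nat \<Rightarrow> nat \<Rightarrow> nat \<Rightarrow> nat \<Rightarrow> int" where
  "jump A B k m = int (k choose A) * int (m choose Suc B) - int (k choose Suc A) * int (m choose B)"

lemma jump_swap: "jump B A m k = - jump A B k m"
  by (simp add: jump_def)

text \<open>The sign of a step is that of the linear factor, which decreases as \<open>k\<close> grows with \<open>k + m\<close>
fixed: this is the source of unimodality.\<close>

lemma jump_identity:
  "int (Suc A) * int (Suc B) * jump A B k m
     = int (k choose A) * int (m choose B) * (int (Suc A) * (int m - int B) - int (Suc B) * (int k - int A))"
proof -
  have "int (Suc A) * int (Suc B) * jump A B k m
      = int (Suc A) * int (k choose A) * (int (Suc B) * int (m choose Suc B))
        - int (Suc B) * int (m choose B) * (int (Suc A) * int (k choose Suc A))"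
    by (simp add: jump_def algebra_simps)
  then show ?thesis
    unfolding Suc_times_binomial_Suc_int by (simp add: algebra_simps)
qed

lemma jump_sign_mono:
  assumes "k \<le> k'" "k + m = k' + m'" "jump A B k m < 0"
  shows "jump A B k' m' \<le> 0"
proof -
  let ?L = "\<lambda>k m. int (Suc A) * (int m - int B) - int (Suc B) * (int k - int A)"
  have "int (k choose A) * int (m choose B) * ?L k m < 0"
    using assms(3) jump_identity[of A B k m] by (metis mult_pos_neg of_nat_0_less_iff zero_less_Suc mult_pos_pos)
  then have "?L k m < 0"
    by (metis mult_nonneg_nonneg not_less of_nat_0_le_iff)
  moreover have "?L k' m' \<le> ?L k m"
  proof -
    have "m' \<le> m" using assms(1,2) by linarith
    then have "int (Suc A) * int m' \<le> int (Suc A) * int m" "int (Suc B) * int k \<le> int (Suc B) * int k'"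
      using assms(1) by (simp_all add: mult_left_mono)
    then show ?thesis unfolding right_diff_distrib by linarith
  qed
  ultimately have "int (k' choose A) * int (m' choose B) * ?L k' m' \<le> 0"
    by (simp add: mult_nonneg_nonpos)
  then have "int (Suc A) * int (Suc B) * jump A B k' m' \<le> 0"
    by (simp only: jump_identity)
  then show ?thesis
    by (simp add: mult_le_0_iff zero_le_mult_iff)
qed

lemma abs_jump_eq_1_imp:
  assumes "\<bar>jump A B k m\<bar> = 1"
  shows "int (Suc A) * int (Suc B)
           = int (k choose A) * int (m choose B) * \<bar>int (Suc A) * (int m - int B) - int (Suc B) * (int k - int A)\<bar>"
proof -
  have "\<bar>int (Suc A) * int (Suc B) * jump A B k m\<bar> = int (Suc A) * int (Suc B)"
    using assms by (simp add: abs_mult)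
  then show ?thesis
    unfolding jump_identity by (simp add: abs_mult)
qed

lemma abs_jump_eq_1_imp_le:
  assumes "\<bar>jump A B k m\<bar> = 1"
  shows "(k choose A) * (m choose B) \<le> Suc A * Suc B"
proof -
  define L where "L = \<bar>int (Suc A) * (int m - int B) - int (Suc B) * (int k - int A)\<bar>"
  have eq: "int (Suc A) * int (Suc B) = int (k choose A) * int (m choose B) * L"
    unfolding L_def using assms by (rule abs_jump_eq_1_imp)
  then have "L \<noteq> 0" by auto
  then have "int (k choose A) * int (m choose B) * 1 \<le> int (k choose A) * int (m choose B) * L"
    by (intro mult_left_mono) (auto simp: L_def)
  then show ?thesis
    using eq by (simp del: of_nat_Suc flip: of_nat_mult)
qed

lemma jump_not_unit_boundary:
  assumes "k \<le> A" "A + B + 3 \<le> k + m"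
  shows "\<bar>jump A B k m\<bar> \<noteq> 1"
proof (cases "k = A")
  case True
  then have "jump A B k m = int (m choose Suc B)"
    by (simp add: jump_def)
  moreover have "m \<le> m choose Suc B"
    using assms True by (intro upper_le_binomial) auto
  ultimately show ?thesis
    using assms True by linarith
next
  case False
  with assms show ?thesis
    by (simp add: jump_def binomial_eq_0)
qed

lemma jump_not_unit_interior_pos:
  assumes "0 < A" "0 < B" "A < k" "B < m" "A + B + 3 \<le> k + m"
  shows "\<bar>jump A B k m\<bar> \<noteq> 1"
proof
  assume "\<bar>jump A B k m\<bar> = 1"
  then have "(k choose A) * (m choose B) \<le> Suc A * Suc B"
    by (rule abs_jump_eq_1_imp_le)
  moreover have "k * m \<le> (k choose A) * (m choose B)"
    using assms by (intro mult_mono upper_le_binomial) auto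
  moreover have "Suc A * Suc B < k * m"
  proof (cases "Suc (Suc A) \<le> k")
    case True
    have "Suc A * Suc B < Suc (Suc A) * Suc B" by simp
    also have "\<dots> \<le> k * m" using True assms by (intro mult_mono) auto
    finally show ?thesis .
  next
    case False
    then have "k = Suc A" "Suc (Suc B) \<le> m" using assms by auto
    have "Suc A * Suc B < Suc A * Suc (Suc B)" by simp
    also have "\<dots> \<le> k * m" using \<open>k = Suc A\<close> \<open>Suc (Suc B) \<le> m\<close> by (intro mult_mono) auto
    finally show ?thesis .
  qed
  ultimately show False by linarith
qed

lemma jump_not_unit_interior_zero:
  assumes "0 < B" "B < m" "B + 3 \<le> k + m"
  shows "\<bar>jump 0 B k m\<bar> \<noteq> 1"
proof
  assume unit: "\<bar>jump 0 B k m\<bar> = 1"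
  show False
  proof (cases "m = Suc B")
    case True
    then have "int (Suc B) = int (Suc B) * \<bar>1 - int (Suc B) * int k\<bar>"
      using abs_jump_eq_1_imp[OF unit] by simp
    moreover have "int (Suc B) * 2 \<le> int (Suc B) * int k"
      using True assms by (intro mult_left_mono) auto
    ultimately show False
      using assms by (simp add: abs_if split: if_splits)
  next
    case False
    then have "Suc B < m choose B"
      using assms upper_le_binomial[of B m] by simp
    then show False
      using abs_jump_eq_1_imp_le[OF unit] by simp
  qed
qed

lemma jump_not_unit:
  assumes "A \<noteq> 0 \<or> B \<noteq> 0" "A + B + 3 \<le> k + m"
  shows "\<bar>jump A B k m\<bar> \<noteq> 1"
proof -
  consider "k \<le> A" | "m \<le> B" | "A < k" "B < m" by linarith
  then show ?thesis
  proof cases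
    case 1
    with assms(2) show ?thesis by (intro jump_not_unit_boundary)
  next
    case 2
    with assms jump_not_unit_boundary[of m B A k] jump_swap[of B A m k] show ?thesis
      by (simp add: add_ac)
  next
    case 3
    consider "A = 0" | "B = 0" | "0 < A" "0 < B" using assms by auto
    then show ?thesis
    proof cases
      case 1
      with 3 assms show ?thesis using jump_not_unit_interior_zero[of B m k] by simp
    next
      case 2
      with 3 assms show ?thesis using jump_not_unit_interior_zero[of A k m] jump_swap[of A 0 k m]
        by (simp add: add_ac)
    next
      case 3
      with \<open>A < k\<close> \<open>B < m\<close> assms show ?thesis by (intro jump_not_unit_interior_pos)
    qed
  qed
qed

section \<open>Unimodal sequences without unit steps\<close>

lemma unimodal_mono_before_max:
  fixes g :: "nat \<Rightarrow> int"
  assumes unimodal: "\<And>i j. i \<le> j \<Longrightarrow> g (Suc i) < g i \<Longrightarrow> g (Suc j) \<le> g j"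
    and max: "\<And>k. g k \<le> g ks" and "j < ks"
  shows "g j \<le> g (Suc j)"
proof (rule ccontr)
  assume "\<not> g j \<le> g (Suc j)"
  then have "g (Suc i) \<le> g i" if "i \<in> {Suc j..}" for i
    using that unimodal[of j i] by auto
  then have "g ks \<le> g (Suc j)"
    by (rule lift_Suc_antimono_le_ivl[where f = g and N = "{Suc j..}"]) (use \<open>j < ks\<close> in auto)
  with \<open>\<not> g j \<le> g (Suc j)\<close> max[of j] show False by linarith
qed

lemma unimodal_antimono_after_max:
  fixes g :: "nat \<Rightarrow> int"
  assumes unimodal: "\<And>i j. i \<le> j \<Longrightarrow> g (Suc i) < g i \<Longrightarrow> g (Suc j) \<le> g j"
    and max: "\<And>k. g k \<le> g ks" and "ks \<le> j"
  shows "g (Suc j) \<le> g j"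
proof (rule ccontr)
  assume "\<not> g (Suc j) \<le> g j"
  then have "g i \<le> g (Suc i)" if "i \<in> {..<j}" for i
    using that unimodal[of i j] by force
  then have "g ks \<le> g j"
    by (rule lift_Suc_mono_le_ivl[where f = g and N = "{..<j}"]) (use \<open>ks \<le> j\<close> in auto)
  with \<open>\<not> g (Suc j) \<le> g j\<close> max[of "Suc j"] show False by linarith
qed

lemma unimodal_no_unit_step_avoids_max_minus_1:
  fixes g :: "nat \<Rightarrow> int"
  assumes no_unit: "\<And>j. \<bar>g (Suc j) - g j\<bar> \<noteq> 1"
    and unimodal: "\<And>i j. i \<le> j \<Longrightarrow> g (Suc i) < g i \<Longrightarrow> g (Suc j) \<le> g j"
    and max: "\<And>k. g k \<le> g ks"
  shows "g k \<noteq> g ks - 1"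
proof
  assume k: "g k = g ks - 1"
  have "k \<noteq> ks"
  proof
    assume "k = ks"
    with k show False by simp
  qed
  then consider "k < ks" | "ks < k" by linarith
  then show False
  proof cases
    case 1
    have "g j = g ks - 1" if "k \<le> j" "j \<le> ks" for j
      using that
    proof (induction j rule: dec_induct)
      case (step j)
      have "g j \<le> g (Suc j)"
        by (rule unimodal_mono_before_max[where ks = ks]) (fact unimodal, fact max, use step in simp)
      with step no_unit[of j] max[of "Suc j"] show ?case by linarith
    qed (use k in simp)
    from this[OF less_imp_le[OF 1] order_refl] show False by simp
  next
    case 2
    have "g j = g ks - 1" if "j \<le> k" "ks \<le> j" for j
      using that
    proof (induction j rule: inc_induct)
      case (step j)
      have "g (Suc j) \<le> g j"
        by (rule unimodal_antimono_after_max[where ks = ks]) (fact unimodal, fact max, use step in simp)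
      with step no_unit[of j] max[of j] show ?case by linarith
    qed (use k in simp)
    from this[OF less_imp_le[OF 2] order_refl] show False by simp
  qed
qed

section \<open>The profile \<open>C(k,a) C(n-k,b)\<close>\<close>

definition choose_profile :: "nat \<Rightarrow> nat \<Rightarrow> nat \<Rightarrow> nat \<Rightarrow> nat" where
  "choose_profile a b n k = (k choose a) * ((n - k) choose b)"

lemma choose_profile_reflect: "k \<le> n \<Longrightarrow> choose_profile a b n k = choose_profile b a n (n - k)"
  by (simp add: choose_profile_def)

lemma choose_profile_eq_0: "n \<le> k \<Longrightarrow> choose_profile a (Suc b) n k = 0"
  by (simp add: choose_profile_def)

lemma choose_profile_Suc_diff:
  assumes "k < n"
  shows "int (choose_profile (Suc A) (Suc B) n (Suc k)) - int (choose_profile (Suc A) (Suc B) n k)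
           = jump A B k (n - Suc k)"
proof -
  have "n - k = Suc (n - Suc k)" using assms by simp
  then show ?thesis by (simp add: choose_profile_def jump_def algebra_simps)
qed

lemma choose_profile_no_unit_step:
  assumes "A \<noteq> 0 \<or> B \<noteq> 0" "A + B + 4 \<le> n"
  shows "\<bar>int (choose_profile (Suc A) (Suc B) n (Suc k)) - int (choose_profile (Suc A) (Suc B) n k)\<bar> \<noteq> 1"
proof (cases "k < n")
  case True
  with assms show ?thesis
    by (simp add: choose_profile_Suc_diff jump_not_unit)
qed (simp add: choose_profile_eq_0)

lemma choose_profile_unimodal:
  assumes "i \<le> j"
    and "int (choose_profile (Suc A) (Suc B) n (Suc i)) < int (choose_profile (Suc A) (Suc B) n i)"
  shows "int (choose_profile (Suc A) (Suc B) n (Suc j)) \<le> int (choose_profile (Suc A) (Suc B) n j)"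
proof (cases "j < n")
  case True
  with assms have "jump A B i (n - Suc i) < 0"
    by (simp flip: choose_profile_Suc_diff)
  then have "jump A B j (n - Suc j) \<le> 0"
    using True assms(1) by (intro jump_sign_mono[of i j]) auto
  with True show ?thesis
    by (simp flip: choose_profile_Suc_diff)
qed (simp add: choose_profile_eq_0)

lemma choose_profile_skips_max_minus_1:
  assumes "A \<noteq> 0 \<or> B \<noteq> 0" "A + B + 4 \<le> n"
    and "\<And>j. choose_profile (Suc A) (Suc B) n j \<le> choose_profile (Suc A) (Suc B) n ks"
  shows "choose_profile (Suc A) (Suc B) n k + 1 \<noteq> choose_profile (Suc A) (Suc B) n ks"
proof -
  let ?g = "\<lambda>j. int (choose_profile (Suc A) (Suc B) n j)"
  have "?g k \<noteq> ?g ks - 1"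
  proof (rule unimodal_no_unit_step_avoids_max_minus_1[where g = ?g])
    show "\<bar>?g (Suc j) - ?g j\<bar> \<noteq> 1" for j
      using assms(1,2) by (rule choose_profile_no_unit_step)
    show "?g (Suc j) \<le> ?g j" if "i \<le> j" "?g (Suc i) < ?g i" for i j
      using that by (rule choose_profile_unimodal)
    show "?g j \<le> ?g ks" for j
      using assms(3) by simp
  qed
  then show ?thesis by linarith
qed

lemma binomial_eq_1_imp: "k \<le> n \<Longrightarrow> n choose k = 1 \<Longrightarrow> k = 0 \<or> k = n"
  using upper_le_binomial[of k n] by (cases "k = 0 \<or> k = n") auto

lemma choose_profile_edge_not_max:
  assumes "0 < B" "B + 3 \<le> n"
  shows "choose_profile 1 (Suc B) n (n - Suc B) < choose_profile 1 (Suc B) n (n - Suc (Suc B))"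
proof -
  define t where "t = n - Suc (Suc B)"
  have "n - (n - Suc B) = Suc B" "n - (n - Suc (Suc B)) = Suc (Suc B)" "n - Suc B = Suc t"
    using assms by (auto simp: t_def)
  moreover have "Suc t < t * Suc (Suc B)"
  proof -
    have "t * 3 \<le> t * Suc (Suc B)" using assms by (intro mult_left_mono) auto
    moreover have "1 \<le> t" using assms by (simp add: t_def)
    ultimately show ?thesis by linarith
  qed
  ultimately show ?thesis
    by (simp add: choose_profile_def t_def)
qed

lemma choose_profile_max_deficit:
  assumes "A \<noteq> 0 \<or> B \<noteq> 0" "A + B + 3 \<le> n"
    and max: "\<And>j. choose_profile (Suc A) (Suc B) n j \<le> choose_profile (Suc A) (Suc B) n k"
    and pos: "0 < choose_profile (Suc A) (Suc B) n k"
  shows "2 \<le> (k - 1 choose A) * (n - k - 1 choose B)"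
proof (rule ccontr)
  assume small: "\<not> ?thesis"
  have "Suc A \<le> k" "Suc B \<le> n - k"
    using pos by (auto simp: choose_profile_def)
  then have "0 < k - 1 choose A" "0 < n - k - 1 choose B"
    by simp_all
  then have "0 < (k - 1 choose A) * (n - k - 1 choose B)"
    by simp
  with small have "(k - 1 choose A) * (n - k - 1 choose B) = 1"
    by linarith
  then have unit: "k - 1 choose A = 1" "n - k - 1 choose B = 1"
    by simp_all
  have "A = 0 \<or> A = k - 1" "B = 0 \<or> B = n - k - 1"
    by (rule binomial_eq_1_imp; use \<open>Suc A \<le> k\<close> \<open>Suc B \<le> n - k\<close> unit in simp)+
  with assms(1) consider "A = k - 1" "B = n - k - 1"
    | "A = 0" "0 < B" "k = n - Suc B" | "B = 0" "0 < A" "k = Suc A"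
    using \<open>Suc A \<le> k\<close> \<open>Suc B \<le> n - k\<close> by fastforce
  then show False
  proof cases
    case 1
    with assms(2) \<open>Suc A \<le> k\<close> \<open>Suc B \<le> n - k\<close> show False by linarith
  next
    case 2
    with choose_profile_edge_not_max[of B n] max[of "n - Suc (Suc B)"] assms(2) show False
      by simp
  next
    case 3
    have "choose_profile (Suc A) 1 n (Suc A) = choose_profile 1 (Suc A) n (n - Suc A)"
      using assms(2) by (intro choose_profile_reflect) simp
    also have "\<dots> < choose_profile 1 (Suc A) n (n - Suc (Suc A))"
      using 3 assms(2) by (intro choose_profile_edge_not_max) auto
    also have "\<dots> = choose_profile (Suc A) 1 n (Suc (Suc A))"
      using choose_profile_reflect[of "n - Suc (Suc A)" n 1 "Suc A"] assms(2) by simp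
    finally show False
      using 3 max[of "Suc (Suc A)"] by simp
  qed
qed

section \<open>The maximum number of occurrences\<close>

lemma finite_bool_lists_length: "finite {w :: bool list. length w = n}"
  using finite_lists_length_eq[of "UNIV :: bool set" n] by simp

lemma occ_le_Mmax: "length w = n \<Longrightarrow> occ p w \<le> Mmax n p"
  unfolding Mmax_def using finite_bool_lists_length[of n] by (intro Max_ge) auto

lemma Mmax_attained: "\<exists>w. length w = n \<and> occ p w = Mmax n p"
proof -
  have "Mmax n p \<in> {occ p w | w :: bool list. length w = n}"
    unfolding Mmax_def using finite_bool_lists_length[of n]
    by (intro Max_in) (auto intro: exI[of _ "replicate n False"])
  then show ?thesis by auto
qed

lemma Bcount_eq_0_iff: "Bcount n p k = 0 \<longleftrightarrow> (\<forall>w. length w = n \<longrightarrow> occ p w \<noteq> k)"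
  unfolding Bcount_def using finite_bool_lists_length[of n] by (auto simp: finite_subset)

lemma count_list_add_count_list_not: "count_list w x + count_list w (\<not> x) = length w"
  by (induction w) auto

lemma occ_two_runs_le_choose_profile:
  "occ (replicate a x @ replicate b (\<not> x)) w \<le> choose_profile a b (length w) (count_list w x)"
proof -
  have "count_list w (\<not> x) = length w - count_list w x"
    using count_list_add_count_list_not[of w x] by simp
  then show ?thesis
    using occ_two_runs_le[of a x b w] by (simp add: choose_profile_def)
qed

lemma occ_two_runs_sorted_eq_choose_profile:
  "k \<le> n \<Longrightarrow> occ (replicate a x @ replicate b (\<not> x)) (replicate k x @ replicate (n - k) (\<not> x))
     = choose_profile a b n k"
  by (simp add: occ_two_runs_sorted choose_profile_def)

lemma choose_profile_le_Mmax:
  "k \<le> n \<Longrightarrow> choose_profile a b n k \<le> Mmax n (replicate a x @ replicate b (\<not> x))"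
  using occ_le_Mmax[of "replicate k x @ replicate (n - k) (\<not> x)" n "replicate a x @ replicate b (\<not> x)"]
  by (simp add: occ_two_runs_sorted_eq_choose_profile)

lemma Mmax_two_runs_eq_choose_profile:
  "\<exists>k \<le> n. Mmax n (replicate a x @ replicate b (\<not> x)) = choose_profile a b n k"
proof -
  obtain w where w: "length w = n" "occ (replicate a x @ replicate b (\<not> x)) w = Mmax n (replicate a x @ replicate b (\<not> x))"
    using Mmax_attained by blast
  moreover have "count_list w x \<le> n"
    using w(1) count_le_length[of w x] by simp
  ultimately show ?thesis
    using occ_two_runs_le_choose_profile[of a x b w] choose_profile_le_Mmax[of "count_list w x" n a b x]
    by (intro exI[of _ "count_list w x"]) auto
qed

lemma occ_two_runs_plus_1_ne_Mmax:
  assumes "A \<noteq> 0 \<or> B \<noteq> 0" "A + B + 4 \<le> n" "length w = n"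
  shows "occ (replicate (Suc A) x @ replicate (Suc B) (\<not> x)) w + 1
           \<noteq> Mmax n (replicate (Suc A) x @ replicate (Suc B) (\<not> x))"
proof
  let ?p = "replicate (Suc A) x @ replicate (Suc B) (\<not> x)"
  let ?P = "choose_profile (Suc A) (Suc B) n"
  assume occ_w: "occ ?p w + 1 = Mmax n ?p"
  obtain ks where "ks \<le> n" and ks: "Mmax n ?p = ?P ks"
    using Mmax_two_runs_eq_choose_profile by blast
  have max: "?P j \<le> ?P ks" for j
  proof (cases "j \<le> n")
    case True
    then show ?thesis using choose_profile_le_Mmax[of j n "Suc A" "Suc B" x] ks by linarith
  qed (simp add: choose_profile_eq_0)
  have skip: "?P j + 1 \<noteq> ?P ks" for j
    using assms(1,2) max by (rule choose_profile_skips_max_minus_1)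
  define kx where "kx = count_list w x"
  have "kx \<le> n" "count_list w (\<not> x) = n - kx"
    using assms(3) count_list_add_count_list_not[of w x] by (auto simp: kx_def)
  show False
  proof (cases "sorted_by x w")
    case True
    then have "w = replicate kx x @ replicate (n - kx) (\<not> x)"
      using sorted_by_eq_replicate \<open>count_list w (\<not> x) = n - kx\<close> kx_def by metis
    then have "occ ?p w = ?P kx"
      using \<open>kx \<le> n\<close> by (simp only: occ_two_runs_sorted_eq_choose_profile)
    with occ_w ks skip show False by simp
  next
    case False
    have deficit: "occ ?p w + (kx - 1 choose A) * (n - kx - 1 choose B) \<le> ?P kx"
      using occ_two_runs_deficit[OF False, of A B] \<open>count_list w (\<not> x) = n - kx\<close>
      by (simp add: kx_def choose_profile_def)
    then have "?P kx = ?P ks"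
      using occ_w ks skip[of kx] max[of kx] by linarith
    then have "2 \<le> (kx - 1 choose A) * (n - kx - 1 choose B)"
      using assms(1,2) max occ_w ks by (intro choose_profile_max_deficit) auto
    with deficit occ_w ks \<open>?P kx = ?P ks\<close> show False by linarith
  qed
qed

lemma Mmax_two_runs_ge_2:
  assumes "A + B + 3 \<le> n"
  shows "2 \<le> Mmax n (replicate (Suc A) x @ replicate (Suc B) (\<not> x))"
proof -
  have "n - Suc A \<le> n - Suc A choose Suc B"
    using assms by (intro upper_le_binomial) auto
  then have "2 \<le> choose_profile (Suc A) (Suc B) n (Suc A)"
    using assms by (simp add: choose_profile_def)
  also have "\<dots> \<le> Mmax n (replicate (Suc A) x @ replicate (Suc B) (\<not> x))"
    using assms by (intro choose_profile_le_Mmax) simp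
  finally show ?thesis .
qed

lemma two_runs_eq_replicate:
  "length (remdups_adj p) = 2 \<Longrightarrow> \<exists>a b x. 0 < a \<and> 0 < b \<and> p = replicate a x @ replicate b (\<not> x)"
proof (induction p rule: remdups_adj.induct)
  case (3 x y xs)
  show ?case
  proof (cases "x = y")
    case True
    with 3 obtain a b z where "0 < a" "0 < b" "y # xs = replicate a z @ replicate b (\<not> z)"
      by auto
    moreover from this have "z = y" by (cases a) auto
    ultimately have "x # y # xs = replicate (Suc a) z @ replicate b (\<not> z)" "0 < b"
      using True by simp_all
    then show ?thesis by blast
  next
    case False
    with 3 have "length (remdups_adj (y # xs)) = 1" by simp
    then have "y # xs = replicate (length (y # xs)) y"
      using remdups_adj_singleton_iff[of "y # xs"] by auto
    moreover have "y = (\<not> x)" using False by auto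
    ultimately have "x # y # xs = replicate 1 x @ replicate (length (y # xs)) (\<not> x)" by simp
    then show ?thesis by (metis length_Cons zero_less_Suc zero_less_one)
  qed
qed auto

theorem mainTheorem16:
  fixes p :: "bool list" and n :: nat
  assumes "num_runs p = 2" and "length p \<ge> 3" and "n \<ge> length p + 2"
  shows "Bcount n p (Mmax n p - 1) = 0 \<and> has_internal_zero p n"
proof -
  obtain A B x where p: "p = replicate (Suc A) x @ replicate (Suc B) (\<not> x)"
    using two_runs_eq_replicate assms(1) unfolding num_runs_def by (metis gr0_implies_Suc)
  have AB: "A \<noteq> 0 \<or> B \<noteq> 0" "A + B + 4 \<le> n"
    using assms(2,3) p by auto
  have M2: "2 \<le> Mmax n p"
    using Mmax_two_runs_ge_2[of A B n x] AB p by simp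
  have gap: "Bcount n p (Mmax n p - 1) = 0"
    unfolding Bcount_eq_0_iff
  proof (intro allI impI)
    fix w :: "bool list"
    assume "length w = n"
    from occ_two_runs_plus_1_ne_Mmax[OF AB this, of x, folded p] M2
    show "occ p w \<noteq> Mmax n p - 1" by linarith
  qed
  have "occ p (replicate n (\<not> x)) = 0"
    by (simp add: p occ_Cons_not_mem)
  then have "Bcount n p 0 \<noteq> 0"
    unfolding Bcount_eq_0_iff by (metis length_replicate)
  moreover have "Bcount n p (Mmax n p) \<noteq> 0"
    using Mmax_attained by (auto simp: Bcount_eq_0_iff)
  ultimately have "has_internal_zero p n"
    unfolding has_internal_zero_def using gap M2
    by (intro exI[of _ 0] exI[of _ "Mmax n p - 1"] exI[of _ "Mmax n p"]) auto
  with gap show ?thesis by blast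
qed

end
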